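(* Let $n,m\ge 3$ and let $G=P_n\square P_m$ be the grid graph. A set $M$ of three vertices of $G$ is a $3$-minimal if and only if all of the following hold: (i) $M$ contains at most one corner vertex; (ii) $M$ contains two boundary vertices lying on opposite sides of the grid; (iii) either $M$ consists of two vertices $(i,j)$ and $(k,j)$ on the same line with $i\neq k$ together with a third vertex $(p,q)$ with $i\le p\le k$ and $q\neq j$, or $M$ consists of two vertices $(i,j)$ and $(i,k)$ on the same line with $j\neq k$ together with a third vertex $(p,q)$ with $j\le q\le k$ and $p\neq i$.
   Context: The grid graph $P_n\square P_m$ has vertex set $\{(i,j):0\le i\le n-1,\ 0\le j\le m-1\}$, with $(i,j)$ adjacent to $(k,l)$ iff $|i-k|+|j-l|=1$; the distance is $d((i,j),(k,l))=|i-k|+|j-l|$. The first coordinate is called the horizontal coordinate and the second the vertical coordinate. A vertex $w$ resolves two vertices $u,v$ if $d(w,u)\ne d(w,v)$. A set $R$ of vertices is resolving if every pair of distinct vertices is resolved by some vertex of $R$. A minimal is a resolving set $R$ such that no $R\setminus\{v\}$, $v\in R$, is resolving; a $k$-minimal is a minimal of cardinality $k$. Corner vertices are those of degree 2, side vertices those of degree 3, interior vertices those of degree 4; boundary vertices are corner or side vertices. A horizontal line is the set of all vertices with a fixed vertical coordinate, a vertical line the set of all vertices with a fixed horizontal coordinate; two vertices are on the same line if they share a coordinate. The sides of the grid are the four lines with first coordinate $0$, first coordinate $n-1$, second coordinate $0$, second coordinate $m-1$; two sides are opposite if they share no vertex (i.e. first coordinate $0$ and $n-1$, or second coordinate $0$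 and $m-1$). "Two boundary vertices on opposite sides" means one lies on a side and the other on the opposite side. *)

theory Defs
  imports Main
begin

type_synonym vtx = "nat \<times> nat"

definition grid_V :: "nat \<Rightarrow> nat \<Rightarrow> vtx set" where
  "grid_V n m = {0..<n} \<times> {0..<m}"

definition gdist :: "vtx \<Rightarrow> vtx \<Rightarrow> nat" where
  "gdist u v = nat \<bar>int (fst u) - int (fst v)\<bar> + nat \<bar>int (snd u) - int (snd v)\<bar>"

definition grid_adj :: "vtx \<Rightarrow> vtx \<Rightarrow> bool" where
  "grid_adj u v \<longleftrightarrow> gdist u v = 1"

definition grid_degree :: "nat \<Rightarrow> nat \<Rightarrow> vtx \<Rightarrow> nat" where
  "grid_degree n m u = card {v \<in> grid_V n m. grid_adj u v}"

definition is_corner :: "nat \<Rightarrow> nat \<Rightarrow> vtx \<Rightarrow> bool" where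
  "is_corner n m u \<longleftrightarrow> u \<in> grid_V n m \<and> grid_degree n m u = 2"

definition is_side :: "nat \<Rightarrow> nat \<Rightarrow> vtx \<Rightarrow> bool" where
  "is_side n m u \<longleftrightarrow> u \<in> grid_V n m \<and> grid_degree n m u = 3"

definition is_boundary :: "nat \<Rightarrow> nat \<Rightarrow> vtx \<Rightarrow> bool" where
  "is_boundary n m u \<longleftrightarrow> is_corner n m u \<or> is_side n m u"

definition resolves :: "vtx \<Rightarrow> vtx \<Rightarrow> vtx \<Rightarrow> bool" where
  "resolves w u v \<longleftrightarrow> gdist w u \<noteq> gdist w v"

definition resolving :: "nat \<Rightarrow> nat \<Rightarrow> vtx set \<Rightarrow> bool" where
  "resolving n m R \<longleftrightarrow> R \<subseteq> grid_V n m \<and>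
     (\<forall>u\<in>grid_V n m. \<forall>v\<in>grid_V n m. u \<noteq> v \<longrightarrow> (\<exists>w\<in>R. resolves w u v))"

definition minimal_resolving :: "nat \<Rightarrow> nat \<Rightarrow> vtx set \<Rightarrow> bool" where
  "minimal_resolving n m R \<longleftrightarrow> resolving n m R \<and> (\<forall>v\<in>R. \<not> resolving n m (R - {v}))"

definition k_minimal :: "nat \<Rightarrow> nat \<Rightarrow> nat \<Rightarrow> vtx set \<Rightarrow> bool" where
  "k_minimal n m k R \<longleftrightarrow> minimal_resolving n m R \<and> card R = k"

definition on_opposite_sides :: "nat \<Rightarrow> nat \<Rightarrow> vtx \<Rightarrow> vtx \<Rightarrow> bool" where
  "on_opposite_sides n m u v \<longleftrightarrow>
     (fst u = 0 \<and> fst v = n - 1) \<or> (fst u = n - 1 \<and> fst v = 0) \<or>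
     (snd u = 0 \<and> snd v = m - 1) \<or> (snd u = m - 1 \<and> snd v = 0)"

end

theory Submission
  imports Defs
begin

text \<open>A vertex w fails to resolve the two diagonal corners of a unit square exactly when it lies
  in one of the two quadrants attached to them. Hence a resolving set meets both pairs of
  opposite quadrants of every unit square; at the four corner squares this produces two
  vertices on opposite sides, and along the sides it forces condition (iii). Conversely, for a
  configuration as in (iii) with two vertices on opposite sides the taxicab distances to the
  three vertices determine a point. A resolving pair of vertices must be two corners on a common
  line, and such a pair does resolve the grid; so a resolving triple of shape (iii) is minimal
  exactly when it contains at most one corner. Transposing the grid exchanges the horizontal and
  vertical cases.\<close>

lemma gdist_Pair:
  "gdist (a, b) (c, d) = (if a \<le> c then c - a else a - c) + (if b \<le> d then d - b else b - d)"
  unfolding gdist_def by auto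

lemma int_gdist: "int (gdist u v) = \<bar>int (fst u) - int (fst v)\<bar> + \<bar>int (snd u) - int (snd v)\<bar>"
  unfolding gdist_def by simp

lemma grid_adj_iff:
  "grid_adj (a, b) v \<longleftrightarrow>
    (0 < a \<and> v = (a - 1, b)) \<or> v = (a + 1, b) \<or> (0 < b \<and> v = (a, b - 1)) \<or> v = (a, b + 1)"
  by (cases v) (auto simp: grid_adj_def gdist_Pair split: if_splits)

lemma grid_degree_eq:
  assumes "(a, b) \<in> grid_V n m"
  shows "grid_degree n m (a, b) =
    of_bool (0 < a) + of_bool (a + 1 < n) + of_bool (0 < b) + of_bool (b + 1 < m)"
proof -
  have "{v \<in> grid_V n m. grid_adj (a, b) v} =
    (if 0 < a then {(a - 1, b)} else {}) \<union> (if a + 1 < n then {(a + 1, b)} else {}) \<union>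
    (if 0 < b then {(a, b - 1)} else {}) \<union> (if b + 1 < m then {(a, b + 1)} else {})"
    using assms by (auto simp: grid_adj_iff grid_V_def)
  then show ?thesis
    unfolding grid_degree_def by (auto simp: card_insert_if simp del: Collect_case_prod)
qed

definition grid_corner :: "nat \<Rightarrow> nat \<Rightarrow> vtx \<Rightarrow> bool" where
  "grid_corner n m u \<longleftrightarrow> (fst u = 0 \<or> fst u = n - 1) \<and> (snd u = 0 \<or> snd u = m - 1)"

lemma is_corner_iff:
  assumes "n \<ge> 2" "m \<ge> 2"
  shows "is_corner n m u \<longleftrightarrow> u \<in> grid_V n m \<and> grid_corner n m u"
proof (cases "u \<in> grid_V n m")
  case True
  then obtain a b where "u = (a, b)" "a < n" "b < m" by (cases u) (auto simp: grid_V_def)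
  then show ?thesis using True assms by (auto simp: is_corner_def grid_corner_def grid_degree_eq)
qed (simp add: is_corner_def)

lemma is_boundaryI:
  assumes "n \<ge> 2" "m \<ge> 2" "u \<in> grid_V n m"
    and "fst u = 0 \<or> fst u = n - 1 \<or> snd u = 0 \<or> snd u = m - 1"
  shows "is_boundary n m u"
proof -
  obtain a b where "u = (a, b)" "a < n" "b < m" using assms(3) by (cases u) (auto simp: grid_V_def)
  then show ?thesis using assms by (auto simp: is_boundary_def is_corner_def is_side_def grid_degree_eq)
qed

lemma on_opposite_sides_boundary:
  assumes "n \<ge> 2" "m \<ge> 2" "u \<in> grid_V n m" "v \<in> grid_V n m" "on_opposite_sides n m u v"
  shows "is_boundary n m u \<and> is_boundary n m v"
  using assms(5) unfolding on_opposite_sides_def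
  by (metis is_boundaryI[OF assms(1,2,3)] is_boundaryI[OF assms(1,2,4)])

lemma resolvingI:
  assumes "M \<subseteq> grid_V n m"
    and "\<And>u v. u \<in> grid_V n m \<Longrightarrow> v \<in> grid_V n m \<Longrightarrow> \<forall>w\<in>M. gdist w u = gdist w v \<Longrightarrow> u = v"
  shows "resolving n m M"
  using assms unfolding resolving_def resolves_def by blast

lemma resolvingE:
  assumes "resolving n m M" "u \<in> grid_V n m" "v \<in> grid_V n m" "u \<noteq> v"
  obtains w where "w \<in> M" "resolves w u v"
  using assms unfolding resolving_def by blast

definition horizontal_config :: "vtx set \<Rightarrow> bool" where
  "horizontal_config M \<longleftrightarrow>
    (\<exists>i j k p q. M = {(i, j), (k, j), (p, q)} \<and> i < k \<and> i \<le> p \<and> p \<le> k \<and> q \<noteq> j)"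

definition vertical_config :: "vtx set \<Rightarrow> bool" where
  "vertical_config M \<longleftrightarrow>
    (\<exists>i j k p q. M = {(i, j), (i, k), (p, q)} \<and> j < k \<and> j \<le> q \<and> q \<le> k \<and> p \<noteq> i)"

lemma horizontal_configI:
  "M = {(i, j), (k, j), (p, q)} \<Longrightarrow> i < k \<Longrightarrow> i \<le> p \<Longrightarrow> p \<le> k \<Longrightarrow> q \<noteq> j \<Longrightarrow> horizontal_config M"
  unfolding horizontal_config_def by blast

lemma vertical_configI:
  "M = {(i, j), (i, k), (p, q)} \<Longrightarrow> j < k \<Longrightarrow> j \<le> q \<Longrightarrow> q \<le> k \<Longrightarrow> p \<noteq> i \<Longrightarrow> vertical_config M"
  unfolding vertical_config_def by blast

lemma horizontal_config_iff:
  "horizontal_config M \<longleftrightarrow> (\<exists>i j k p q. (i, j) \<in> M \<and> (k, j) \<in> M \<and> (p, q) \<in> M \<and>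
    M = {(i, j), (k, j), (p, q)} \<and> i \<noteq> k \<and> i \<le> p \<and> p \<le> k \<and> q \<noteq> j)"
  unfolding horizontal_config_def by (intro ex_cong1) auto

lemma vertical_config_iff:
  "vertical_config M \<longleftrightarrow> (\<exists>i j k p q. (i, j) \<in> M \<and> (i, k) \<in> M \<and> (p, q) \<in> M \<and>
    M = {(i, j), (i, k), (p, q)} \<and> j \<noteq> k \<and> j \<le> q \<and> q \<le> k \<and> p \<noteq> i)"
  unfolding vertical_config_def by (intro ex_cong1) auto

section \<open>Transposing the grid\<close>

lemma gdist_swap [simp]: "gdist (prod.swap u) (prod.swap v) = gdist u v"
  unfolding gdist_def by simp

lemma grid_V_swap [simp]: "prod.swap u \<in> grid_V m n \<longleftrightarrow> u \<in> grid_V n m"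
  by (cases u) (auto simp: grid_V_def)

lemma grid_corner_swap [simp]: "grid_corner m n (prod.swap u) \<longleftrightarrow> grid_corner n m u"
  unfolding grid_corner_def by auto

lemma on_opposite_sides_swap [simp]:
  "on_opposite_sides m n (prod.swap u) (prod.swap v) \<longleftrightarrow> on_opposite_sides n m u v"
  unfolding on_opposite_sides_def by auto

lemma resolving_swap:
  assumes "resolving n m M"
  shows "resolving m n (prod.swap ` M)"
  unfolding resolving_def
proof (intro conjI ballI impI)
  show "prod.swap ` M \<subseteq> grid_V m n"
    using assms by (auto simp: resolving_def grid_V_def)
  fix u v assume "u \<in> grid_V m n" "v \<in> grid_V m n" "u \<noteq> v"
  then have "prod.swap u \<in> grid_V n m" "prod.swap v \<in> grid_V n m" "prod.swap u \<noteq> prod.swap v"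
    by (metis grid_V_swap swap_swap)+
  then obtain w where "w \<in> M" "resolves w (prod.swap u) (prod.swap v)"
    by (rule resolvingE[OF assms])
  then show "\<exists>w\<in>prod.swap ` M. resolves w u v"
    by (metis gdist_swap image_eqI resolves_def swap_swap)
qed

lemma resolving_swap_iff: "resolving m n (prod.swap ` M) \<longleftrightarrow> resolving n m M"
  using resolving_swap[of m n "prod.swap ` M"] resolving_swap[of n m M]
  by (auto simp: image_image)

lemma k_minimal_swap_iff: "k_minimal m n k (prod.swap ` M) \<longleftrightarrow> k_minimal n m k M"
proof -
  have "prod.swap ` M - {prod.swap v} = prod.swap ` (M - {v})" for v
    by (auto simp: image_set_diff)
  then show ?thesis
    unfolding k_minimal_def minimal_resolving_def
    by (auto simp: resolving_swap_iff card_image)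
qed

lemma vertical_config_iff_swap: "vertical_config M \<longleftrightarrow> horizontal_config (prod.swap ` M)"
proof
  assume "vertical_config M"
  then obtain i j k p q where "M = {(i, j), (i, k), (p, q)}" "j < k" "j \<le> q" "q \<le> k" "p \<noteq> i"
    unfolding vertical_config_def by blast
  then show "horizontal_config (prod.swap ` M)"
    by (intro horizontal_configI[of _ j i k q p]) simp_all
next
  assume "horizontal_config (prod.swap ` M)"
  then obtain i j k p q where M': "prod.swap ` M = {(i, j), (k, j), (p, q)}"
    and "i < k" "i \<le> p" "p \<le> k" "q \<noteq> j"
    unfolding horizontal_config_def by blast
  have "M = prod.swap ` prod.swap ` M"
    by (simp add: image_image)
  also have "\<dots> = {(j, i), (j, k), (q, p)}"
    unfolding M' by simp
  finally show "vertical_config M"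
    using vertical_configI \<open>i < k\<close> \<open>i \<le> p\<close> \<open>p \<le> k\<close> \<open>q \<noteq> j\<close> by blast
qed

lemma Collect_image: "{u \<in> f ` M. P u} = f ` {u \<in> M. P (f u)}"
  by auto

section \<open>What a resolving set must contain\<close>

lemma resolves_diagonal: "resolves w (x, y) (x + 1, y + 1) \<Longrightarrow> fst w \<le> x \<longleftrightarrow> snd w \<le> y"
  by (cases w) (auto simp: resolves_def gdist_Pair split: if_splits)

lemma resolves_antidiagonal: "resolves w (x, y + 1) (x + 1, y) \<Longrightarrow> fst w \<le> x \<longleftrightarrow> y < snd w"
  by (cases w) (auto simp: resolves_def gdist_Pair split: if_splits)

lemma resolves_row_neighbours: "resolves w (x - 1, y) (x + 1, y) \<Longrightarrow> 0 < x \<Longrightarrow> fst w \<noteq> x"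
  by (cases w) (auto simp: resolves_def gdist_Pair split: if_splits)

lemma resolving_unit_square:
  assumes "resolving n m M" "x + 1 < n" "y + 1 < m"
  shows "\<exists>w\<in>M. fst w \<le> x \<longleftrightarrow> snd w \<le> y"
    and "\<exists>w\<in>M. fst w \<le> x \<longleftrightarrow> y < snd w"
proof -
  have grid: "(x, y) \<in> grid_V n m" "(x + 1, y + 1) \<in> grid_V n m"
    "(x, y + 1) \<in> grid_V n m" "(x + 1, y) \<in> grid_V n m"
    using assms by (auto simp: grid_V_def)
  obtain w where "w \<in> M" "resolves w (x, y) (x + 1, y + 1)"
    by (rule resolvingE[OF assms(1) grid(1,2)]) simp
  then show "\<exists>w\<in>M. fst w \<le> x \<longleftrightarrow> snd w \<le> y"
    using resolves_diagonal by blast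
  obtain w' where "w' \<in> M" "resolves w' (x, y + 1) (x + 1, y)"
    by (rule resolvingE[OF assms(1) grid(3,4)]) simp
  then show "\<exists>w\<in>M. fst w \<le> x \<longleftrightarrow> y < snd w"
    using resolves_antidiagonal by blast
qed

lemma resolving_leaves_column:
  assumes "resolving n m M" "0 < x" "x + 1 < n" "0 < m"
  shows "\<exists>w\<in>M. fst w \<noteq> x"
proof -
  have "(x - 1, 0) \<in> grid_V n m" "(x + 1, 0) \<in> grid_V n m"
    using assms by (auto simp: grid_V_def)
  then obtain w where "w \<in> M" "resolves w (x - 1, 0) (x + 1, 0)"
    by (rule resolvingE[OF assms(1)]) (use assms(2) in simp)
  then show ?thesis
    using resolves_row_neighbours assms(2) by blast
qed

lemma resolving_leaves_row:
  assumes "resolving n m M" "0 < y" "y + 1 < m" "0 < n"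
  shows "\<exists>w\<in>M. snd w \<noteq> y"
  using resolving_leaves_column[of m n "prod.swap ` M" y] assms
  by (auto simp: resolving_swap_iff)

lemma resolving_opposite_sides:
  assumes R: "resolving n m M" and "n \<ge> 2" "m \<ge> 2"
  shows "(\<exists>u\<in>M. \<exists>v\<in>M. fst u = 0 \<and> fst v = n - 1) \<or> (\<exists>u\<in>M. \<exists>v\<in>M. snd u = 0 \<and> snd v = m - 1)"
proof -
  have bounds: "fst w < n" "snd w < m" if "w \<in> M" for w
    using R that by (auto simp: resolving_def grid_V_def)
  have "(\<exists>u\<in>M. fst u = 0) \<or> (\<exists>u\<in>M. snd u = 0)"
    using resolving_unit_square(2)[OF R, of 0 0] assms by auto
  moreover have "(\<exists>u\<in>M. fst u = 0) \<or> (\<exists>u\<in>M. snd u = m - 1)"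
    using resolving_unit_square(1)[OF R, of 0 "m - 2"] assms bounds by force
  moreover have "(\<exists>u\<in>M. fst u = n - 1) \<or> (\<exists>u\<in>M. snd u = 0)"
    using resolving_unit_square(1)[OF R, of "n - 2" 0] assms bounds by force
  moreover have "(\<exists>u\<in>M. fst u = n - 1) \<or> (\<exists>u\<in>M. snd u = m - 1)"
    using resolving_unit_square(2)[OF R, of "n - 2" "m - 2"] assms bounds by force
  ultimately show ?thesis by blast
qed

lemma resolving_pair_aligned:
  assumes "resolving n m {u, v}"
  shows "fst u = fst v \<or> snd u = snd v"
proof (rule ccontr)
  assume "\<not> ?thesis"
  moreover have "max (fst u) (fst v) < n" "max (snd u) (snd v) < m"
    using assms by (auto simp: resolving_def grid_V_def)
  ultimately have "min (fst u) (fst v) + 1 < n" "min (snd u) (snd v) + 1 < m"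
    by auto
  from resolving_unit_square[OF assms this] \<open>\<not> ?thesis\<close> show False
    by (auto simp: min_def split: if_splits)
qed

lemma resolving_column_pair_corners:
  assumes R: "resolving n m {(a, b), (a, b')}" and "b \<noteq> b'" "n \<ge> 2" "m \<ge> 2"
  shows "grid_corner n m (a, b) \<and> grid_corner n m (a, b')"
proof -
  have bounds: "a < n" "b < m" "b' < m"
    using R by (auto simp: resolving_def grid_V_def)
  have column: "a = 0 \<or> a = n - 1"
    using resolving_leaves_column[OF R, of a] bounds by fastforce
  have sq: "n - 2 + 1 < n" "m - 2 + 1 < m" "0 + 1 < n" "0 + 1 < m"
    using assms by auto
  have "b = 0 \<or> b' = 0"
    using resolving_unit_square[OF R sq(3,4)] resolving_unit_square[OF R sq(1,4)] column
    by auto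
  moreover have "b = m - 1 \<or> b' = m - 1"
    using resolving_unit_square[OF R sq(3,2)] resolving_unit_square[OF R sq(1,2)] column bounds
    by auto
  ultimately show ?thesis
    using column assms unfolding grid_corner_def by auto
qed

lemma resolving_pair_corners:
  assumes R: "resolving n m {u, v}" and "u \<noteq> v" "n \<ge> 2" "m \<ge> 2"
  shows "grid_corner n m u \<and> grid_corner n m v"
  using resolving_pair_aligned[OF R]
proof
  assume "fst u = fst v"
  then show ?thesis
    using resolving_column_pair_corners[of n m "fst u" "snd u" "snd v"] assms
    by (metis prod.collapse)
next
  assume "snd u = snd v"
  moreover have "resolving m n {prod.swap u, prod.swap v}"
    using resolving_swap[OF R] by simp
  ultimately show ?thesis
    using resolving_column_pair_corners[of m n "snd u" "fst u" "fst v"] assms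
    by (metis grid_corner_swap prod.collapse swap_simp)
qed

section \<open>Resolving configurations\<close>

text \<open>When both points lie between the columns i and k, the first two equations determine x.
  When they lie between the rows j and q, the differences d c = \<bar>c - x\<bar> - \<bar>c - x'\<bar> satisfy
  d i = d k = - d p; as d is monotone in c, and strictly so between x and x', this forces x = x'.
  In both cases y is then determined by its distances to the two distinct rows j and q.\<close>

lemma taxicab_horizontal_triple:
  fixes i j k p q x y x' y' :: int
  assumes "\<bar>i - x\<bar> + \<bar>j - y\<bar> = \<bar>i - x'\<bar> + \<bar>j - y'\<bar>"
    and "\<bar>k - x\<bar> + \<bar>j - y\<bar> = \<bar>k - x'\<bar> + \<bar>j - y'\<bar>"
    and "\<bar>p - x\<bar> + \<bar>q - y\<bar> = \<bar>p - x'\<bar> + \<bar>q - y'\<bar>"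
    and "i < k" "i \<le> p" "p \<le> k" "q \<noteq> j"
    and "(i \<le> x \<and> x \<le> k \<and> i \<le> x' \<and> x' \<le> k) \<or> (j \<le> y \<and> y \<le> q \<and> j \<le> y' \<and> y' \<le> q) \<or>
      (q \<le> y \<and> y \<le> j \<and> q \<le> y' \<and> y' \<le> j)"
  shows "x = x' \<and> y = y'"
  using assms by smt

lemma horizontal_config_resolving:
  assumes "horizontal_config M" "M \<subseteq> grid_V n m"
    and "u \<in> M" "v \<in> M" "on_opposite_sides n m u v"
  shows "resolving n m M"
proof -
  obtain i j k p q where M: "M = {(i, j), (k, j), (p, q)}" and "i < k" "i \<le> p" "p \<le> k" "q \<noteq> j"
    using assms(1) unfolding horizontal_config_def by blast
  moreover have "k < n" "j < m" "q < m"
    using assms(2) M by (auto simp: grid_V_def)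
  ultimately have ends: "(i = 0 \<and> k = n - 1) \<or> (j = 0 \<and> q = m - 1) \<or> (j = m - 1 \<and> q = 0)"
    using assms(3-5) unfolding on_opposite_sides_def by auto
  show ?thesis
  proof (rule resolvingI[OF assms(2)])
    fix u' v' assume "u' \<in> grid_V n m" "v' \<in> grid_V n m" and eq: "\<forall>w\<in>M. gdist w u' = gdist w v'"
    then obtain x y x' y' where uv: "u' = (x, y)" "v' = (x', y')" "x < n" "x' < n" "y < m" "y' < m"
      by (auto simp: grid_V_def)
    have "int x = int x' \<and> int y = int y'"
    proof (rule taxicab_horizontal_triple)
      show "\<bar>int i - int x\<bar> + \<bar>int j - int y\<bar> = \<bar>int i - int x'\<bar> + \<bar>int j - int y'\<bar>"
        "\<bar>int k - int x\<bar> + \<bar>int j - int y\<bar> = \<bar>int k - int x'\<bar> + \<bar>int j - int y'\<bar>"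
        "\<bar>int p - int x\<bar> + \<bar>int q - int y\<bar> = \<bar>int p - int x'\<bar> + \<bar>int q - int y'\<bar>"
        using eq M uv by (metis int_gdist insertCI fst_conv snd_conv)+
    qed (use M ends uv \<open>i < k\<close> \<open>i \<le> p\<close> \<open>p \<le> k\<close> \<open>q \<noteq> j\<close> in auto)
    then show "u' = v'" using uv by simp
  qed
qed

lemma config_resolving:
  assumes "horizontal_config M \<or> vertical_config M" "M \<subseteq> grid_V n m"
    and "u \<in> M" "v \<in> M" "on_opposite_sides n m u v"
  shows "resolving n m M"
  using assms(1)
proof
  assume "vertical_config M"
  then have "resolving m n (prod.swap ` M)"
    using assms(2-5) by (intro horizontal_config_resolving[of _ _ _ "prod.swap u" "prod.swap v"])
      (auto simp: vertical_config_iff_swap grid_V_def)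
  then show ?thesis by (simp add: resolving_swap_iff)
qed (use assms horizontal_config_resolving in blast)

lemma side_ends_resolving:
  assumes "b = 0 \<or> b = m - 1" "b < m" "n \<ge> 2"
  shows "resolving n m {(0, b), (n - 1, b)}"
proof (rule resolvingI)
  show "{(0, b), (n - 1, b)} \<subseteq> grid_V n m"
    using assms by (auto simp: grid_V_def)
  fix u v assume "u \<in> grid_V n m" "v \<in> grid_V n m" and eq: "\<forall>w\<in>{(0, b), (n - 1, b)}. gdist w u = gdist w v"
  then obtain x y x' y' where uv: "u = (x, y)" "v = (x', y')" "x < n" "x' < n" "y < m" "y' < m"
    by (auto simp: grid_V_def)
  have "gdist (0, b) u = gdist (0, b) v" "gdist (n - 1, b) u = gdist (n - 1, b) v"
    using eq by auto
  then show "u = v"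
    using uv assms by (auto simp: gdist_Pair split: if_splits)
qed

lemma aligned_corners_resolving:
  assumes "u \<in> grid_V n m" "v \<in> grid_V n m" "grid_corner n m u" "grid_corner n m v" "u \<noteq> v"
    and "fst u = fst v \<or> snd u = snd v" "n \<ge> 2" "m \<ge> 2"
  shows "resolving n m {u, v}"
  using assms(6)
proof
  assume "snd u = snd v"
  then have "{u, v} = {(0, snd u), (n - 1, snd u)}"
    using assms(3-5) unfolding grid_corner_def by (auto simp: prod_eq_iff)
  then show ?thesis
    using side_ends_resolving[of "snd u" m n] assms unfolding grid_corner_def
    by (auto simp: grid_V_def)
next
  assume "fst u = fst v"
  then have "prod.swap ` {u, v} = {(0, fst u), (m - 1, fst u)}"
    using assms(3-5) unfolding grid_corner_def by (auto simp: prod_eq_iff)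
  then show ?thesis
    using side_ends_resolving[of "fst u" n m] assms resolving_swap_iff[of m n "{u, v}"]
    unfolding grid_corner_def by (auto simp: grid_V_def)
qed

section \<open>Minimal resolving sets of size three\<close>

lemma card_3_third:
  assumes "card M = 3" "u \<in> M" "v \<in> M" "u \<noteq> v"
  obtains w where "M = {u, v, w}" "w \<notin> {u, v}"
proof -
  have "finite M"
    using assms(1) by (metis card.infinite zero_neq_numeral)
  then have "card (M - {u, v}) = 1"
    using assms by (simp add: card_Diff_subset)
  then obtain w where "M - {u, v} = {w}"
    by (auto simp: card_1_singleton_iff)
  then show ?thesis
    using that assms(2,3) by blast
qed

lemma resolving_columns_third_vertex:
  assumes R: "resolving n m {(0, b1), (n - 1, b2), (a, b)}" and "b1 \<noteq> b2"
  shows "a = 0 \<or> a = n - 1"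
proof (rule ccontr)
  assume "\<not> ?thesis"
  moreover have "a < n" "b1 < m" "b2 < m"
    using R by (auto simp: resolving_def grid_V_def)
  ultimately have "a - 1 + 1 < n" "a + 1 < n" "0 < a"
    by auto
  consider "b1 < b2" | "b2 < b1"
    using \<open>b1 \<noteq> b2\<close> by linarith
  then show False
  proof cases
    case 1
    then have "b1 + 1 < m" "b2 - 1 + 1 < m"
      using \<open>b2 < m\<close> by auto
    from resolving_unit_square[OF R \<open>a - 1 + 1 < n\<close> \<open>b1 + 1 < m\<close>]
      resolving_unit_square[OF R \<open>a + 1 < n\<close> \<open>b2 - 1 + 1 < m\<close>]
    show False using 1 \<open>0 < a\<close> \<open>a + 1 < n\<close> by auto
  next
    case 2
    then have "b1 - 1 + 1 < m" "b2 + 1 < m"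
      using \<open>b1 < m\<close> by auto
    from resolving_unit_square[OF R \<open>a - 1 + 1 < n\<close> \<open>b1 - 1 + 1 < m\<close>]
      resolving_unit_square[OF R \<open>a + 1 < n\<close> \<open>b2 + 1 < m\<close>]
    show False using 2 \<open>0 < a\<close> \<open>a + 1 < n\<close> by auto
  qed
qed

lemma resolving_columns_vertical_config:
  assumes R: "resolving n m M" and M: "M = {(0, b1), (n - 1, b2), (a, b)}" and "b1 \<noteq> b2" "n \<ge> 2"
  shows "vertical_config M"
proof -
  have bounds: "b1 < m" "b2 < m"
    using R M by (auto simp: resolving_def grid_V_def)
  have sq: "0 + 1 < n" "n - 2 + 1 < n"
    using \<open>n \<ge> 2\<close> by auto
  have a: "a = 0 \<or> a = n - 1"
    using resolving_columns_third_vertex R M \<open>b1 \<noteq> b2\<close> by blast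
  consider "b1 < b2" | "b2 < b1"
    using \<open>b1 \<noteq> b2\<close> by linarith
  then show ?thesis
  proof cases
    case 1
    then have "b2 - 1 + 1 < m" "b1 + 1 < m"
      using bounds by auto
    from a show ?thesis
    proof
      assume "a = 0"
      with resolving_unit_square(2)[OF R sq(1) \<open>b2 - 1 + 1 < m\<close>] M 1 \<open>n \<ge> 2\<close> have "b2 \<le> b"
        by auto
      with M \<open>a = 0\<close> 1 \<open>n \<ge> 2\<close> show ?thesis
        by (intro vertical_configI[of M 0 b1 b "n - 1" b2]) auto
    next
      assume "a = n - 1"
      with resolving_unit_square(2)[OF R sq(2) \<open>b1 + 1 < m\<close>] M 1 \<open>n \<ge> 2\<close> have "b \<le> b1"
        by auto
      with M \<open>a = n - 1\<close> 1 \<open>n \<ge> 2\<close> show ?thesis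
        by (intro vertical_configI[of M "n - 1" b b2 0 b1]) auto
    qed
  next
    case 2
    then have "b2 + 1 < m" "b1 - 1 + 1 < m"
      using bounds by auto
    from a show ?thesis
    proof
      assume "a = 0"
      with resolving_unit_square(1)[OF R sq(1) \<open>b2 + 1 < m\<close>] M 2 \<open>n \<ge> 2\<close> have "b \<le> b2"
        by auto
      with M \<open>a = 0\<close> 2 \<open>n \<ge> 2\<close> show ?thesis
        by (intro vertical_configI[of M 0 b b1 "n - 1" b2]) auto
    next
      assume "a = n - 1"
      with resolving_unit_square(1)[OF R sq(2) \<open>b1 - 1 + 1 < m\<close>] M 2 \<open>n \<ge> 2\<close> have "b1 \<le> b"
        by auto
      with M \<open>a = n - 1\<close> 2 \<open>n \<ge> 2\<close> show ?thesis
        by (intro vertical_configI[of M "n - 1" b2 b 0 b1]) auto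
    qed
  qed
qed

lemma k_minimal_corners_not_aligned:
  assumes K: "k_minimal n m 3 M" and "u \<in> M" "v \<in> M" "u \<noteq> v"
    and "grid_corner n m u" "grid_corner n m v" "n \<ge> 2" "m \<ge> 2"
  shows "fst u \<noteq> fst v \<and> snd u \<noteq> snd v"
proof (rule ccontr)
  assume "\<not> ?thesis"
  moreover have "u \<in> grid_V n m" "v \<in> grid_V n m"
    using K assms(2,3) unfolding k_minimal_def minimal_resolving_def resolving_def by blast+
  ultimately have "resolving n m {u, v}"
    using aligned_corners_resolving assms by blast
  obtain w where "M = {u, v, w}" "w \<notin> {u, v}"
    using card_3_third K assms(2-4) unfolding k_minimal_def by metis
  then have "w \<in> M" "M - {w} = {u, v}"
    by auto
  with \<open>resolving n m {u, v}\<close> K show False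
    unfolding k_minimal_def minimal_resolving_def by metis
qed

lemma k_minimal_opposite_columns_config:
  assumes K: "k_minimal n m 3 M" and "(0, b1) \<in> M" "(n - 1, b2) \<in> M" "n \<ge> 2" "m \<ge> 2"
  shows "horizontal_config M \<or> vertical_config M"
proof -
  have R: "resolving n m M" and "card M = 3"
    using K by (simp_all add: k_minimal_def minimal_resolving_def)
  moreover have "(0, b1) \<noteq> (n - 1, b2)"
    using \<open>n \<ge> 2\<close> by simp
  ultimately obtain a b where M: "M = {(0, b1), (n - 1, b2), (a, b)}" "(a, b) \<notin> {(0, b1), (n - 1, b2)}"
    using card_3_third[of M "(0, b1)" "(n - 1, b2)"] assms(2,3) by (metis surj_pair)
  have "a < n" "b1 < m"
    using R M by (auto simp: resolving_def grid_V_def)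
  show ?thesis
  proof (cases "b1 = b2")
    case False
    with resolving_columns_vertical_config[OF R M(1) _ \<open>n \<ge> 2\<close>] show ?thesis
      by blast
  next
    case True
    show ?thesis
    proof (cases "b = b1")
      case False
      then have "horizontal_config M"
        by (intro horizontal_configI[of M 0 b1 "n - 1" a b]) (use M True \<open>a < n\<close> \<open>n \<ge> 2\<close> in auto)
      then show ?thesis ..
    next
      case True
      then have row: "\<forall>w\<in>M. snd w = b1"
        using M \<open>b1 = b2\<close> by auto
      have "b1 = 0 \<or> b1 = m - 1"
      proof (rule ccontr)
        assume "\<not> ?thesis"
        then have "0 < b1" "b1 + 1 < m"
          using \<open>b1 < m\<close> by auto
        with resolving_leaves_row[OF R] row \<open>n \<ge> 2\<close> show False
          by (metis gr0I not_numeral_le_zero)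
      qed
      then have "grid_corner n m (0, b1)" "grid_corner n m (n - 1, b1)"
        by (auto simp: grid_corner_def)
      with k_minimal_corners_not_aligned[OF K assms(2), of "(n - 1, b1)"] assms \<open>b1 = b2\<close>
      show ?thesis
        by simp
    qed
  qed
qed

lemma k_minimal_config:
  assumes K: "k_minimal n m 3 M" and "n \<ge> 2" "m \<ge> 2"
  shows "horizontal_config M \<or> vertical_config M"
proof -
  have "resolving n m M"
    using K by (simp add: k_minimal_def minimal_resolving_def)
  from resolving_opposite_sides[OF this assms(2,3)] show ?thesis
  proof (elim disjE bexE conjE)
    fix u v assume "u \<in> M" "v \<in> M" "fst u = 0" "fst v = n - 1"
    then show ?thesis
      using k_minimal_opposite_columns_config[OF K, of "snd u" "snd v"] assms(2,3) by (metis prod.collapse)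
  next
    fix u v assume "u \<in> M" "v \<in> M" "snd u = 0" "snd v = m - 1"
    then have "(0, fst u) \<in> prod.swap ` M" "(m - 1, fst v) \<in> prod.swap ` M"
      by (metis pair_in_swap_image prod.collapse)+
    then have "horizontal_config (prod.swap ` M) \<or> vertical_config (prod.swap ` M)"
      using k_minimal_opposite_columns_config[of m n "prod.swap ` M"] K assms
      by (simp add: k_minimal_swap_iff)
    then show ?thesis
      using vertical_config_iff_swap[of M] vertical_config_iff_swap[of "prod.swap ` M"]
      by (auto simp: image_image)
  qed
qed

lemma horizontal_config_corners_card:
  assumes "horizontal_config M" "M \<subseteq> grid_V n m"
    and aligned: "\<And>u v. u \<in> M \<Longrightarrow> v \<in> M \<Longrightarrow> u \<noteq> v \<Longrightarrow> grid_corner n m u \<Longrightarrow> grid_corner n m v \<Longrightarrow>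
      fst u \<noteq> fst v \<and> snd u \<noteq> snd v"
  shows "card {u \<in> M. grid_corner n m u} \<le> 1"
proof -
  obtain i j k p q where M: "M = {(i, j), (k, j), (p, q)}" and "i < k" "i \<le> p" "p \<le> k" "q \<noteq> j"
    using assms(1) unfolding horizontal_config_def by blast
  have "k < n"
    using assms(2) M by (auto simp: grid_V_def)
  have AB: "\<not> (grid_corner n m (i, j) \<and> grid_corner n m (k, j))"
    using aligned[of "(i, j)" "(k, j)"] M \<open>i < k\<close> by auto
  have AC: "\<not> (grid_corner n m (i, j) \<and> grid_corner n m (p, q))"
  proof
    assume "grid_corner n m (i, j) \<and> grid_corner n m (p, q)"
    moreover from this have "i \<noteq> p"
      using aligned[of "(i, j)" "(p, q)"] M \<open>q \<noteq> j\<close> by auto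
    ultimately have "k = p" "grid_corner n m (k, j)"
      using \<open>i \<le> p\<close> \<open>p \<le> k\<close> \<open>k < n\<close> unfolding grid_corner_def by auto
    then show False
      using aligned[of "(k, j)" "(p, q)"] M \<open>q \<noteq> j\<close> \<open>grid_corner n m (i, j) \<and> _\<close> by auto
  qed
  have BC: "\<not> (grid_corner n m (k, j) \<and> grid_corner n m (p, q))"
  proof
    assume "grid_corner n m (k, j) \<and> grid_corner n m (p, q)"
    moreover from this have "k \<noteq> p"
      using aligned[of "(k, j)" "(p, q)"] M \<open>q \<noteq> j\<close> by auto
    ultimately have "i = p" "grid_corner n m (i, j)"
      using \<open>i \<le> p\<close> \<open>p \<le> k\<close> \<open>k < n\<close> unfolding grid_corner_def by auto
    then show False
      using aligned[of "(i, j)" "(p, q)"] M \<open>q \<noteq> j\<close> \<open>grid_corner n m (k, j) \<and> _\<close> by auto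
  qed
  show ?thesis
    unfolding M using AB AC BC by (auto simp: card_le_Suc0_iff_eq)
qed

lemma config_corners_card:
  assumes "horizontal_config M \<or> vertical_config M" "M \<subseteq> grid_V n m"
    and aligned: "\<And>u v. u \<in> M \<Longrightarrow> v \<in> M \<Longrightarrow> u \<noteq> v \<Longrightarrow> grid_corner n m u \<Longrightarrow> grid_corner n m v \<Longrightarrow>
      fst u \<noteq> fst v \<and> snd u \<noteq> snd v"
  shows "card {u \<in> M. grid_corner n m u} \<le> 1"
  using assms(1)
proof
  assume "horizontal_config M"
  then show ?thesis
    using assms(2) aligned by (rule horizontal_config_corners_card)
next
  assume "vertical_config M"
  then have "horizontal_config (prod.swap ` M)"
    by (simp add: vertical_config_iff_swap)
  moreover have "prod.swap ` M \<subseteq> grid_V m n"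
    using assms(2) by (auto simp: grid_V_def)
  moreover have "fst u \<noteq> fst v \<and> snd u \<noteq> snd v"
    if "u \<in> prod.swap ` M" "v \<in> prod.swap ` M" "u \<noteq> v" "grid_corner m n u" "grid_corner m n v" for u v
  proof -
    have "prod.swap u \<in> M" "prod.swap v \<in> M" "prod.swap u \<noteq> prod.swap v"
      using that(1-3) by (metis image_iff swap_swap)+
    moreover have "grid_corner n m (prod.swap u)" "grid_corner n m (prod.swap v)"
      using that(4,5) grid_corner_swap[of n m] by (metis swap_swap)+
    ultimately show ?thesis
      using aligned by fastforce
  qed
  ultimately have "card {u \<in> prod.swap ` M. grid_corner m n u} \<le> 1"
    by (rule horizontal_config_corners_card)
  moreover have "card {u \<in> prod.swap ` M. grid_corner m n u} = card {u \<in> M. grid_corner n m u}"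
    unfolding Collect_image by (simp add: card_image)
  ultimately show ?thesis
    by simp
qed

lemma k_minimal_3_iff:
  assumes "n \<ge> 2" "m \<ge> 2" "M \<subseteq> grid_V n m" "card M = 3"
  shows "k_minimal n m 3 M \<longleftrightarrow>
    card {u \<in> M. grid_corner n m u} \<le> 1 \<and> (\<exists>u\<in>M. \<exists>v\<in>M. on_opposite_sides n m u v) \<and>
    (horizontal_config M \<or> vertical_config M)"
    (is "_ \<longleftrightarrow> ?corners \<and> ?opposite \<and> ?config")
proof
  assume K: "k_minimal n m 3 M"
  then have "resolving n m M"
    by (simp add: k_minimal_def minimal_resolving_def)
  from resolving_opposite_sides[OF this assms(1,2)] have ?opposite
    unfolding on_opposite_sides_def by blast
  moreover have ?config
    by (rule k_minimal_config[OF K assms(1,2)])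
  moreover from this have ?corners
    using k_minimal_corners_not_aligned[OF K _ _ _ _ _ assms(1,2)]
    by (rule config_corners_card[OF _ assms(3)])
  ultimately show "?corners \<and> ?opposite \<and> ?config"
    by blast
next
  assume rhs: "?corners \<and> ?opposite \<and> ?config"
  then obtain u v where "u \<in> M" "v \<in> M" "on_opposite_sides n m u v"
    by blast
  with rhs have R: "resolving n m M"
    using config_resolving[OF _ assms(3)] by blast
  have "\<not> resolving n m (M - {w})" if "w \<in> M" for w
  proof
    assume Rw: "resolving n m (M - {w})"
    have "card (M - {w}) = 2"
      using \<open>w \<in> M\<close> assms(4) by (simp add: card_Diff_singleton)
    then obtain u v where uv: "M - {w} = {u, v}" "u \<noteq> v"
      by (auto simp: card_2_iff)
    with Rw have "grid_corner n m u" "grid_corner n m v"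
      using resolving_pair_corners[of n m u v] assms(1,2) by simp_all
    moreover have "finite M"
      using assms(4) by (simp add: card_ge_0_finite)
    ultimately have "card {u, v} \<le> card {u \<in> M. grid_corner n m u}"
      using uv by (intro card_mono) auto
    then show False
      using rhs \<open>u \<noteq> v\<close> by simp
  qed
  with R assms(4) show "k_minimal n m 3 M"
    unfolding k_minimal_def minimal_resolving_def by blast
qed

theorem theorem2:
  fixes n m :: nat and M :: "vtx set"
  assumes "n \<ge> 3" and "m \<ge> 3"
    and "M \<subseteq> grid_V n m" and "card M = 3"
  shows "k_minimal n m 3 M \<longleftrightarrow>
    (card {u \<in> M. is_corner n m u} \<le> 1 \<and>
     (\<exists>u\<in>M. \<exists>v\<in>M. is_boundary n m u \<and> is_boundary n m v \<and> on_opposite_sides n m u v) \<and>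
     ((\<exists>i j k p q. (i, j) \<in> M \<and> (k, j) \<in> M \<and> (p, q) \<in> M \<and> M = {(i, j), (k, j), (p, q)} \<and>
          i \<noteq> k \<and> i \<le> p \<and> p \<le> k \<and> q \<noteq> j) \<or>
      (\<exists>i j k p q. (i, j) \<in> M \<and> (i, k) \<in> M \<and> (p, q) \<in> M \<and> M = {(i, j), (i, k), (p, q)} \<and>
          j \<noteq> k \<and> j \<le> q \<and> q \<le> k \<and> p \<noteq> i)))"
proof -
  have n2: "n \<ge> 2" and m2: "m \<ge> 2"
    using assms(1,2) by simp_all
  have "{u \<in> M. is_corner n m u} = {u \<in> M. grid_corner n m u}"
    using is_corner_iff[OF n2 m2] assms(3) by blast
  moreover have "(\<exists>u\<in>M. \<exists>v\<in>M. is_boundary n m u \<and> is_boundary n m v \<and> on_opposite_sides n m u v) \<longleftrightarrow>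
      (\<exists>u\<in>M. \<exists>v\<in>M. on_opposite_sides n m u v)"
    using on_opposite_sides_boundary[OF n2 m2] assms(3) by blast
  ultimately show ?thesis
    unfolding k_minimal_3_iff[OF n2 m2 assms(3,4)] horizontal_config_iff vertical_config_iff
    by simp
qed

end
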